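(* Let $G=\langle a,s,t \mid a^2=1,\ [a,a^t]=1,\ [s,t]=1,\ a^s=aa^t\rangle$. Then in $G$: (i) $[a^{t^i},a^{t^j}]=1$ for all $i,j\in\mathbb Z$; (ii) $[a^{s^i},a^{t^j}]=1$ for all integers $i<0$ and all $j\in\mathbb Z$; (iii) $[a^{s^i},a^{s^j}]=1$ for all integers $i,j<0$.
   Context: Notation: $[x,y]=x^{-1}y^{-1}xy$ and $x^y=y^{-1}xy$. *)

theory Defs
  imports "HOL-Algebra.Group"
begin

definition gconj :: "('a, 'b) monoid_scheme \<Rightarrow> 'a \<Rightarrow> 'a \<Rightarrow> 'a" where
  "gconj G x y = inv\<^bsub>G\<^esub> y \<otimes>\<^bsub>G\<^esub> x \<otimes>\<^bsub>G\<^esub> y"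

definition gcomm :: "('a, 'b) monoid_scheme \<Rightarrow> 'a \<Rightarrow> 'a \<Rightarrow> 'a" where
  "gcomm G x y = inv\<^bsub>G\<^esub> x \<otimes>\<^bsub>G\<^esub> inv\<^bsub>G\<^esub> y \<otimes>\<^bsub>G\<^esub> x \<otimes>\<^bsub>G\<^esub> y"

end

(* Write A_i = a^(t^i). As s and t commute, conjugation by s acts by A_i^s = A_i A_(i+1),
   and [a, a^t] = 1 makes neighbouring terms commute. Conjugating [A_i, A_(i+n+1)] = 1 by s
   and cancelling the factors already known to commute yields [A_i, A_(i+n+2)] = 1, so all
   A_i commute by induction on the distance. Hence each A_j^(s^n), n >= 0, is a product of
   A_k's and commutes with a = A_0; conjugating back by s^(-n) gives (ii), and conjugating
   [a^(s^(i-j)), a] = 1 by s^j shows that in fact all a^(s^i) commute. *)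

theory Submission
  imports Defs "HOL-Algebra.Generated_Groups"
begin

definition centralizer :: "('a, 'b) monoid_scheme \<Rightarrow> 'a set \<Rightarrow> 'a set" where
  "centralizer G S = {g \<in> carrier G. \<forall>h \<in> S. g \<otimes>\<^bsub>G\<^esub> h = h \<otimes>\<^bsub>G\<^esub> g}"

context group
begin

lemma gcomm_eq_one_iff:
  assumes "x \<in> carrier G" "y \<in> carrier G"
  shows "gcomm G x y = \<one> \<longleftrightarrow> x \<otimes> y = y \<otimes> x"
proof -
  have "gcomm G x y = inv (y \<otimes> x) \<otimes> (x \<otimes> y)"
    using assms by (simp add: gcomm_def inv_mult_group m_assoc)
  also have "\<dots> = \<one> \<longleftrightarrow> x \<otimes> y = y \<otimes> x"
    using assms by (metis inv_closed inv_equality inv_inv m_closed r_inv)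
  finally show ?thesis .
qed

lemma subgroup_centralizer:
  assumes "S \<subseteq> carrier G"
  shows "subgroup (centralizer G S) G"
proof (rule subgroupI)
  show "centralizer G S \<subseteq> carrier G"
    by (auto simp: centralizer_def)
  have "\<one> \<in> centralizer G S"
    using assms by (auto simp: centralizer_def)
  then show "centralizer G S \<noteq> {}"
    by blast
next
  fix g h
  assume g: "g \<in> centralizer G S" and h: "h \<in> centralizer G S"
  show "inv g \<in> centralizer G S"
  proof -
    have "inv g \<otimes> k = k \<otimes> inv g" if "k \<in> S" for k
      using g that assms by (auto simp: centralizer_def inv_solve_left inv_solve_right m_assoc)
    then show ?thesis
      using g by (simp add: centralizer_def)
  qed
  have "g \<otimes> h \<otimes> k = k \<otimes> (g \<otimes> h)" if "k \<in> S" for k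
  proof -
    have gk: "g \<otimes> k = k \<otimes> g" and hk: "h \<otimes> k = k \<otimes> h"
      and carr: "g \<in> carrier G" "h \<in> carrier G" "k \<in> carrier G"
      using g h that assms by (auto simp: centralizer_def)
    have "g \<otimes> h \<otimes> k = g \<otimes> k \<otimes> h"
      using carr by (simp add: m_assoc hk)
    also have "\<dots> = k \<otimes> (g \<otimes> h)"
      using carr by (simp add: gk m_assoc)
    finally show ?thesis .
  qed
  then show "g \<otimes> h \<in> centralizer G S"
    using g h by (simp add: centralizer_def)
qed

lemma int_pow_commute:
  assumes "x \<otimes> y = y \<otimes> x" "x \<in> carrier G" "y \<in> carrier G"
  shows "x [^] (i::int) \<otimes> y = y \<otimes> x [^] i"
proof -
  have "x \<in> centralizer G {y}"
    using assms by (simp add: centralizer_def)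
  then have "x [^] i \<in> centralizer G {y}"
    using assms by (intro subgroup_int_pow_closed subgroup_centralizer) simp_all
  then show ?thesis
    by (simp add: centralizer_def)
qed

lemma gconj_closed [simp]: "x \<in> carrier G \<Longrightarrow> g \<in> carrier G \<Longrightarrow> gconj G x g \<in> carrier G"
  by (simp add: gconj_def)

lemma gconj_one_right [simp]: "x \<in> carrier G \<Longrightarrow> gconj G x \<one> = x"
  by (simp add: gconj_def)

lemma gconj_mult:
  "x \<in> carrier G \<Longrightarrow> y \<in> carrier G \<Longrightarrow> g \<in> carrier G \<Longrightarrow>
    gconj G (x \<otimes> y) g = gconj G x g \<otimes> gconj G y g"
  by (simp add: gconj_def m_assoc[symmetric]) (simp add: m_assoc)

lemma gconj_gconj:
  "x \<in> carrier G \<Longrightarrow> g \<in> carrier G \<Longrightarrow> h \<in> carrier G \<Longrightarrow>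
    gconj G (gconj G x g) h = gconj G x (g \<otimes> h)"
  by (simp add: gconj_def m_assoc inv_mult_group)

lemma gconj_gconj_int_pow:
  "x \<in> carrier G \<Longrightarrow> g \<in> carrier G \<Longrightarrow>
    gconj G (gconj G x (g [^] (i::int))) (g [^] (j::int)) = gconj G x (g [^] (i + j))"
  by (simp add: gconj_gconj int_pow_mult)

lemma gconj_commute_iff:
  assumes "x \<in> carrier G" "y \<in> carrier G" "g \<in> carrier G"
  shows "gconj G x g \<otimes> gconj G y g = gconj G y g \<otimes> gconj G x g \<longleftrightarrow> x \<otimes> y = y \<otimes> x"
proof -
  have "gconj G x g \<otimes> gconj G y g = gconj G y g \<otimes> gconj G x g \<longleftrightarrow>
      gconj G (x \<otimes> y) g = gconj G (y \<otimes> x) g"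
    using assms by (simp add: gconj_mult)
  also have "\<dots> \<longleftrightarrow> x \<otimes> y = y \<otimes> x"
    using assms by (simp add: gconj_def)
  finally show ?thesis .
qed

lemma commute_of_products_commute:
  assumes carr: "x \<in> carrier G" "x' \<in> carrier G" "y \<in> carrier G" "y' \<in> carrier G"
    and xx': "x \<otimes> x' = x' \<otimes> x" and xy: "x \<otimes> y = y \<otimes> x"
    and x'y: "x' \<otimes> y = y \<otimes> x'" and x'y': "x' \<otimes> y' = y' \<otimes> x'"
    and products: "(x \<otimes> x') \<otimes> (y \<otimes> y') = (y \<otimes> y') \<otimes> (x \<otimes> x')"
  shows "x \<otimes> y' = y' \<otimes> x"
proof -
  have "x' \<otimes> y \<otimes> (x \<otimes> y') = x' \<otimes> (x \<otimes> y) \<otimes> y'"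
    using carr by (simp add: xy m_assoc)
  also have "\<dots> = (x \<otimes> x') \<otimes> (y \<otimes> y')"
    using carr by (simp add: xx' m_assoc)
  also have "\<dots> = (y \<otimes> y') \<otimes> (x \<otimes> x')"
    by (rule products)
  also have "\<dots> = y \<otimes> (x' \<otimes> y') \<otimes> x"
    using carr by (simp add: xx' x'y' m_assoc)
  also have "\<dots> = x' \<otimes> y \<otimes> (y' \<otimes> x)"
    using carr by (simp add: x'y m_assoc)
  finally show ?thesis
    using carr by simp
qed

end

locale shift_product_sequence = group +
  fixes x :: "int \<Rightarrow> 'a" and s :: 'a
  assumes x_closed [simp]: "x i \<in> carrier G"
    and s_closed [simp]: "s \<in> carrier G"
    and x_commute_succ: "x i \<otimes> x (i + 1) = x (i + 1) \<otimes> x i"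
    and gconj_x: "gconj G (x i) s = x i \<otimes> x (i + 1)"
begin

lemma x_commute_at_distance:
  "x i \<otimes> x (i + int n) = x (i + int n) \<otimes> x i \<and>
   x i \<otimes> x (i + int n + 1) = x (i + int n + 1) \<otimes> x i"
proof (induction n arbitrary: i)
  case 0
  show ?case by (simp add: x_commute_succ)
next
  case (Suc n)
  have "x i \<otimes> x (i + int n + 2) = x (i + int n + 2) \<otimes> x i"
  proof (rule commute_of_products_commute)
    show "x i \<otimes> x (i + 1) = x (i + 1) \<otimes> x i"
      by (rule x_commute_succ)
    show "x i \<otimes> x (i + int n + 1) = x (i + int n + 1) \<otimes> x i"
      using Suc.IH[of i] by blast
    show "x (i + 1) \<otimes> x (i + int n + 1) = x (i + int n + 1) \<otimes> x (i + 1)"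
      using Suc.IH[of "i + 1"] by (simp add: ac_simps)
    show "x (i + 1) \<otimes> x (i + int n + 2) = x (i + int n + 2) \<otimes> x (i + 1)"
      using Suc.IH[of "i + 1"] by (simp add: ac_simps)
    have "gconj G (x i) s \<otimes> gconj G (x (i + int n + 1)) s
        = gconj G (x (i + int n + 1)) s \<otimes> gconj G (x i) s"
      using Suc.IH[of i] by (simp add: gconj_commute_iff)
    then show "x i \<otimes> x (i + 1) \<otimes> (x (i + int n + 1) \<otimes> x (i + int n + 2))
        = x (i + int n + 1) \<otimes> x (i + int n + 2) \<otimes> (x i \<otimes> x (i + 1))"
      by (simp add: gconj_x ac_simps)
  qed simp_all
  then show ?case
    using Suc.IH[of i] by (simp add: ac_simps)
qed

lemma x_commute: "x i \<otimes> x j = x j \<otimes> x i"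
proof -
  have "x i \<otimes> x j = x j \<otimes> x i" if "i \<le> j" for i j
    using x_commute_at_distance[of i "nat (j - i)"] that by simp
  then show ?thesis
    by (metis linear)
qed

lemma gconj_pow_in_centralizer: "gconj G (x j) (s [^] (n::nat)) \<in> centralizer G (range x)"
proof (induction n arbitrary: j)
  case 0
  show ?case by (auto simp: centralizer_def x_commute)
next
  case (Suc n)
  have "subgroup (centralizer G (range x)) G"
    by (rule subgroup_centralizer) auto
  note product_closed = subgroup.m_closed[OF this Suc.IH Suc.IH]
  have "gconj G (x j) (s [^] Suc n) = gconj G (gconj G (x j) s) (s [^] n)"
    by (simp only: nat_pow_Suc2[OF s_closed]) (simp add: gconj_gconj)
  also have "\<dots> = gconj G (x j) (s [^] n) \<otimes> gconj G (x (j + 1)) (s [^] n)"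
    by (simp add: gconj_x gconj_mult)
  finally show ?case
    using product_closed by (simp only:)
qed

lemma gconj_nonpos_pow_commute_x:
  assumes "i \<le> 0"
  shows "gconj G (x k) (s [^] (i::int)) \<otimes> x j = x j \<otimes> gconj G (x k) (s [^] i)"
proof -
  define n where "n = nat (- i)"
  have "gconj G (x j) (s [^] int n) \<otimes> x k = x k \<otimes> gconj G (x j) (s [^] int n)"
    using gconj_pow_in_centralizer[of j n] by (simp add: centralizer_def int_pow_int)
  then have "gconj G (gconj G (x j) (s [^] int n)) (s [^] i) \<otimes> gconj G (x k) (s [^] i)
      = gconj G (x k) (s [^] i) \<otimes> gconj G (gconj G (x j) (s [^] int n)) (s [^] i)"
    by (simp add: gconj_commute_iff)
  moreover have "gconj G (gconj G (x j) (s [^] int n)) (s [^] i) = x j"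
    using assms by (simp add: gconj_gconj_int_pow n_def)
  ultimately show ?thesis
    by simp
qed

lemma gconj_pows_commute:
  "gconj G (x k) (s [^] (i::int)) \<otimes> gconj G (x k) (s [^] (j::int))
    = gconj G (x k) (s [^] j) \<otimes> gconj G (x k) (s [^] i)"
proof -
  have "gconj G (x k) (s [^] i) \<otimes> gconj G (x k) (s [^] j)
      = gconj G (x k) (s [^] j) \<otimes> gconj G (x k) (s [^] i)" if "i \<le> j" for i j :: int
  proof -
    have "gconj G (x k) (s [^] (i - j)) \<otimes> x k = x k \<otimes> gconj G (x k) (s [^] (i - j))"
      using that by (simp add: gconj_nonpos_pow_commute_x)
    then have "gconj G (gconj G (x k) (s [^] (i - j))) (s [^] j) \<otimes> gconj G (x k) (s [^] j)
        = gconj G (x k) (s [^] j) \<otimes> gconj G (gconj G (x k) (s [^] (i - j))) (s [^] j)"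
      by (simp add: gconj_commute_iff)
    then show ?thesis
      by (simp add: gconj_gconj_int_pow)
  qed
  then show ?thesis
    by (metis linear)
qed

end

lemma (in group) shift_product_sequence_conjugates:
  assumes a: "a \<in> carrier G" and s: "s \<in> carrier G" and t: "t \<in> carrier G"
    and "a \<otimes> gconj G a t = gconj G a t \<otimes> a"
    and "s \<otimes> t = t \<otimes> s"
    and "gconj G a s = a \<otimes> gconj G a t"
  shows "shift_product_sequence G (\<lambda>i. gconj G a (t [^] i)) s"
proof
  fix i :: int
  have succ: "gconj G a (t [^] (i + 1)) = gconj G (gconj G a t) (t [^] i)"
    using gconj_gconj_int_pow[OF a t, of 1 i] t by (simp add: add.commute)
  show "gconj G a (t [^] i) \<otimes> gconj G a (t [^] (i + 1))
      = gconj G a (t [^] (i + 1)) \<otimes> gconj G a (t [^] i)"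
    unfolding succ using assms by (simp add: gconj_commute_iff)
  have "gconj G (gconj G a (t [^] i)) s = gconj G a (s \<otimes> t [^] i)"
    using assms by (simp add: gconj_gconj int_pow_commute)
  also have "\<dots> = gconj G (a \<otimes> gconj G a t) (t [^] i)"
    using assms by (simp add: gconj_gconj[symmetric])
  finally show "gconj G (gconj G a (t [^] i)) s = gconj G a (t [^] i) \<otimes> gconj G a (t [^] (i + 1))"
    using a t by (simp add: gconj_mult succ)
qed (use assms in simp_all)

theorem mainTheorem2:
  fixes G (structure) and a s t :: 'a
  assumes "group G"
    and "a \<in> carrier G" "s \<in> carrier G" "t \<in> carrier G"
    and "a \<otimes> a = \<one>"
    and "gcomm G a (gconj G a t) = \<one>"
    and "gcomm G s t = \<one>"
    and "gconj G a s = a \<otimes> gconj G a t"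
  shows "(\<forall>(i::int) (j::int). gcomm G (gconj G a (t [^] i)) (gconj G a (t [^] j)) = \<one>)
       \<and> (\<forall>(i::int) (j::int). i < 0 \<longrightarrow> gcomm G (gconj G a (s [^] i)) (gconj G a (t [^] j)) = \<one>)
       \<and> (\<forall>(i::int) (j::int). i < 0 \<longrightarrow> j < 0 \<longrightarrow> gcomm G (gconj G a (s [^] i)) (gconj G a (s [^] j)) = \<one>)"
proof -
  interpret group G by fact
  have "shift_product_sequence G (\<lambda>i. gconj G a (t [^] i)) s"
    using assms by (intro shift_product_sequence_conjugates) (simp_all add: gcomm_eq_one_iff)
  then interpret A: shift_product_sequence G "\<lambda>i. gconj G a (t [^] i)" s .
  have a_eq_A0: "gconj G (gconj G a (t [^] (0::int))) g = gconj G a g" for g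
    using assms(2) by simp
  show ?thesis
    using A.x_commute A.gconj_nonpos_pow_commute_x[of _ 0] A.gconj_pows_commute[of 0]
    by (simp add: a_eq_A0 gcomm_eq_one_iff assms(2-4))
qed

end
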